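(* Let $\mathbf{X},\mathbf{X}_1,\ldots,\mathbf{X}_n$ be i.i.d. samples from a continuous density $f$ which is bounded away from zero and infinity on $[0,1]^p$. If $\mathbf{X}$ lies inside the convex hull of $\mathbf{X}_1,\ldots,\mathbf{X}_n$, let $\mathbf{X}_{(1)}$ be any one of the vertices of the simplex of the Delaunay triangulation of $\{\mathbf{X}_1,\ldots,\mathbf{X}_n\}$ covering $\mathbf{X}$; otherwise let $\mathbf{X}_{(1)}$ be the nearest neighbour of $\mathbf{X}$ among $\mathbf{X}_1,\ldots,\mathbf{X}_n$. Then $\mathbf{X}_{(1)}\to\mathbf{X}$ in probability as $n\to\infty$.
   Context: The Delaunay triangulation of a finite point set in general position in $\mathbb{R}^p$ is the unique triangulation of its convex hull into $p$-simplices with vertices in the set such that no point of the set lies inside the circumscribed sphere of any simplex. *)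

theory Defs
  imports "HOL-Probability.Probability"
begin

definition delaunay_simplex :: "'a::euclidean_space set \<Rightarrow> 'a set \<Rightarrow> bool" where
  "delaunay_simplex P S \<longleftrightarrow>
     S \<subseteq> P \<and> card S = DIM('a) + 1 \<and> \<not> affine_dependent S \<and>
     (\<exists>c r. (\<forall>v\<in>S. dist c v = r) \<and> (\<forall>q\<in>P. r \<le> dist c q))"

definition X1_choice :: "'a::euclidean_space set \<Rightarrow> 'a \<Rightarrow> 'a \<Rightarrow> bool" where
  "X1_choice P x y \<longleftrightarrow>
     (if x \<in> convex hull P
      then (\<exists>S. delaunay_simplex P S \<and> x \<in> convex hull S \<and> y \<in> S)
      else (y \<in> P \<and> (\<forall>q\<in>P. dist x y \<le> dist x q)))"

end

theory Submission
  imports Defs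
begin

(* If the chosen point Y is at distance more than e from X, then X lies in the closure of a
   ball of radius at least e/2 that contains no sample point: the circumscribed ball of the
   Delaunay simplex covering X, or the ball around X through its nearest neighbour.  Unless X
   is within tau of the boundary of the cube, an event of probability O(tau), this ball contains
   a ball of radius tau/2 inside the cube, hence a whole cell of a fixed grid of mesh
   tau/(4p).  Each of the finitely many grid cells inside the cube has probability at least
   c (mesh)^p, so the probability that one of them misses all of X_1, ..., X_n decays
   geometrically in n.  Letting tau tend to 0 gives the claim. *)

lemma LIMSEQ_zero_if_eventually_le_add_null:
  fixes a :: "nat \<Rightarrow> real"
  assumes nonneg: "\<And>n. 0 \<le> a n"
    and approx: "\<And>\<delta>. 0 < \<delta> \<Longrightarrow> \<exists>b. b \<longlonglongrightarrow> 0 \<and> (\<forall>\<^sub>F n in sequentially. a n \<le> \<delta> + b n)"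
  shows "a \<longlonglongrightarrow> 0"
proof (rule order_tendstoI)
  fix y :: real assume "y < 0"
  then show "\<forall>\<^sub>F n in sequentially. y < a n"
    using nonneg by (simp add: order.strict_trans2)
next
  fix y :: real assume "0 < y"
  then obtain b where "b \<longlonglongrightarrow> 0" and le: "\<forall>\<^sub>F n in sequentially. a n \<le> y / 2 + b n"
    using approx[of "y / 2"] by auto
  then have "\<forall>\<^sub>F n in sequentially. b n < y / 2"
    using \<open>0 < y\<close> by (intro order_tendstoD(2)) auto
  with le show "\<forall>\<^sub>F n in sequentially. a n < y"
    by eventually_elim simp
qed

definition grid_cell :: "real \<Rightarrow> ('a::euclidean_space \<Rightarrow> nat) \<Rightarrow> 'a set" where
  "grid_cell h k =
     cbox (\<Sum>b\<in>Basis. (real (k b) * h) *\<^sub>R b) (\<Sum>b\<in>Basis. ((real (k b) + 1) * h) *\<^sub>R b)"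

definition cube_cells :: "real \<Rightarrow> ('a::euclidean_space \<Rightarrow> nat) set" where
  "cube_cells h = {k \<in> Basis \<rightarrow>\<^sub>E UNIV. grid_cell h k \<subseteq> cbox 0 One}"

definition shrunk_unit_cube :: "real \<Rightarrow> 'a::euclidean_space set" where
  "shrunk_unit_cube \<tau> = cbox (\<tau> *\<^sub>R One) ((1 - \<tau>) *\<^sub>R One)"

lemma mem_grid_cell:
  "z \<in> grid_cell h k \<longleftrightarrow>
     (\<forall>b\<in>Basis. real (k b) * h \<le> z \<bullet> b \<and> z \<bullet> b \<le> (real (k b) + 1) * h)"
  unfolding grid_cell_def mem_box
  by (simp add: inner_sum_left inner_Basis if_distrib cong: if_cong)

lemma measure_grid_cell:
  assumes "0 \<le> h"
  shows "measure lborel (grid_cell h k :: 'a::euclidean_space set) = h ^ DIM('a)"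
  using assms by (simp add: grid_cell_def measure_lborel_cbox_eq inner_sum_left inner_Basis
      if_distrib algebra_simps cong: if_cong)

lemma grid_cell_subset_cball:
  fixes c :: "'a::euclidean_space" and h :: real
  assumes h: "0 < h" and c: "\<forall>b\<in>Basis. 0 \<le> c \<bullet> b"
  obtains k where "k \<in> Basis \<rightarrow>\<^sub>E UNIV" "grid_cell h k \<subseteq> cball c (real DIM('a) * h)"
proof
  define k where "k = restrict (\<lambda>b. nat \<lfloor>(c \<bullet> b) / h\<rfloor>) Basis"
  show "k \<in> Basis \<rightarrow>\<^sub>E UNIV" by (simp add: k_def)
  show "grid_cell h k \<subseteq> cball c (real DIM('a) * h)"
  proof
    fix z assume z: "z \<in> grid_cell h k"
    have coord: "\<bar>(z - c) \<bullet> b\<bar> \<le> h" if b: "b \<in> Basis" for b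
    proof -
      have kb: "real (k b) = \<lfloor>(c \<bullet> b) / h\<rfloor>" using b c h by (simp add: k_def)
      have "real (k b) \<le> (c \<bullet> b) / h" "(c \<bullet> b) / h < real (k b) + 1"
        using floor_correct[of "(c \<bullet> b) / h"] unfolding kb by linarith+
      then have "real (k b) * h \<le> c \<bullet> b" "c \<bullet> b < (real (k b) + 1) * h"
        using h by (simp_all add: pos_le_divide_eq pos_divide_less_eq)
      with z b show ?thesis by (auto simp: mem_grid_cell inner_diff_left abs_le_iff algebra_simps)
    qed
    have "norm (z - c) \<le> (\<Sum>b\<in>Basis. \<bar>(z - c) \<bullet> b\<bar>)" by (rule norm_le_l1)
    also have "\<dots> \<le> (\<Sum>b\<in>(Basis :: 'a set). h)" using coord by (intro sum_mono) auto
    finally show "z \<in> cball c (real DIM('a) * h)" by (simp add: dist_norm norm_minus_commute)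
  qed
qed

lemma finite_cube_cells:
  assumes "0 < h"
  shows "finite (cube_cells h :: ('a::euclidean_space \<Rightarrow> nat) set)"
proof (rule finite_subset)
  show "finite (Basis \<rightarrow>\<^sub>E {..nat \<lfloor>1 / h\<rfloor>} :: ('a \<Rightarrow> nat) set)" by (rule finite_PiE) auto
  show "cube_cells h \<subseteq> (Basis :: 'a set) \<rightarrow>\<^sub>E {..nat \<lfloor>1 / h\<rfloor>}"
  proof
    fix k :: "'a \<Rightarrow> nat" assume k: "k \<in> cube_cells h"
    have "k b \<le> nat \<lfloor>1 / h\<rfloor>" if b: "b \<in> Basis" for b
    proof -
      let ?z = "\<Sum>b\<in>Basis. (real (k b) * h) *\<^sub>R b"
      have "?z \<in> grid_cell h k"
        using assms by (simp add: mem_grid_cell inner_sum_left inner_Basis if_distrib cong: if_cong)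
      then have "real (k b) * h \<le> 1"
        using k b by (force simp: cube_cells_def mem_box inner_sum_left inner_Basis if_distrib cong: if_cong)
      then show ?thesis using assms by (simp add: le_nat_floor pos_le_divide_eq)
    qed
    then show "k \<in> Basis \<rightarrow>\<^sub>E {..nat \<lfloor>1 / h\<rfloor>}" using k by (auto simp: cube_cells_def)
  qed
qed

lemma ball_subset_unit_cube:
  assumes "x \<in> shrunk_unit_cube \<tau>"
  shows "ball x \<tau> \<subseteq> cbox 0 (One :: 'a::euclidean_space)"
proof
  fix z assume "z \<in> ball x \<tau>"
  then have d: "norm (z - x) < \<tau>" by (simp add: dist_norm norm_minus_commute)
  show "z \<in> cbox 0 One" unfolding mem_box
  proof (intro ballI conjI)
    fix b :: 'a assume b: "b \<in> Basis"
    have "\<bar>(z - x) \<bullet> b\<bar> \<le> norm (z - x)" using b by (rule Basis_le_norm)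
    moreover have "\<tau> \<le> x \<bullet> b" "x \<bullet> b \<le> 1 - \<tau>"
      using assms b by (auto simp: shrunk_unit_cube_def mem_box)
    ultimately show "0 \<bullet> b \<le> z \<bullet> b" "z \<bullet> b \<le> One \<bullet> b"
      using d b by (auto simp: inner_diff_left abs_le_iff)
  qed
qed

lemma X1_choice_empty_ball:
  assumes "X1_choice P x y"
  obtains c r where "dist y x \<le> 2 * r" "dist c x \<le> r" "P \<inter> ball c r = {}"
proof (cases "x \<in> convex hull P")
  case True
  then obtain S c r where S: "x \<in> convex hull S" "y \<in> S"
    and sphere: "\<forall>v\<in>S. dist c v = r" and empty: "\<forall>q\<in>P. r \<le> dist c q"
    using assms by (auto simp: X1_choice_def delaunay_simplex_def)
  have "convex hull S \<subseteq> cball c r"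
    using sphere by (intro hull_minimal) (auto simp: convex_cball)
  then have "dist c x \<le> r" using S by auto
  moreover have "dist y x \<le> 2 * r"
    using dist_triangle[of y x c] sphere S \<open>dist c x \<le> r\<close> by (simp add: dist_commute)
  ultimately show ?thesis
    using that empty by fastforce
next
  case False
  then have "\<forall>q\<in>P. dist x y \<le> dist x q" using assms by (auto simp: X1_choice_def)
  then show ?thesis by (intro that[where c = x and r = "dist x y"]) (auto simp: dist_commute)
qed

lemma ball_inside_ball_near_point:
  fixes x c :: "'a::real_normed_vector"
  assumes "dist c x \<le> r" "0 < s" "s \<le> r"
  obtains c' where "dist x c' \<le> s" "ball c' s \<subseteq> ball c r"
proof
  define c' where "c' = x + (s / r) *\<^sub>R (c - x)"
  have r: "0 < r" using assms by linarith
  have "dist x c' = (s / r) * dist c x" using assms r by (simp add: c'_def dist_norm dist_commute)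
  also have "\<dots> \<le> s" using assms r by (simp add: divide_le_eq mult.commute mult_left_mono)
  finally show "dist x c' \<le> s" .
  have "c - c' = (1 - s / r) *\<^sub>R (c - x)" by (simp add: c'_def algebra_simps)
  then have "dist c c' = (1 - s / r) * dist c x" using assms r by (simp add: dist_norm)
  also have "\<dots> \<le> (1 - s / r) * r" using assms r by (intro mult_left_mono) auto
  finally have "dist c c' \<le> r - s" using r by (simp add: algebra_simps)
  show "ball c' s \<subseteq> ball c r"
  proof
    fix z assume "z \<in> ball c' s"
    then show "z \<in> ball c r" using \<open>dist c c' \<le> r - s\<close> dist_triangle[of c z c'] by simp
  qed
qed

lemma X1_choice_far_empty_cube_cell:
  fixes x y :: "'a::euclidean_space"
  assumes "X1_choice P x y" "0 < \<tau>" "2 * \<tau> \<le> dist y x" "x \<in> shrunk_unit_cube \<tau>"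
  shows "\<exists>k\<in>cube_cells (\<tau> / (4 * real DIM('a))). P \<inter> grid_cell (\<tau> / (4 * real DIM('a))) k = {}"
proof -
  define h where "h = \<tau> / (4 * real DIM('a))"
  obtain c r where r: "dist y x \<le> 2 * r" "dist c x \<le> r" and empty: "P \<inter> ball c r = {}"
    using X1_choice_empty_ball[OF assms(1)] .
  obtain c' where c': "dist x c' \<le> \<tau> / 2" "ball c' (\<tau> / 2) \<subseteq> ball c r"
    using ball_inside_ball_near_point[OF r(2), of "\<tau> / 2"] r(1) assms(2,3) by auto
  have near_x: "ball c' (\<tau> / 2) \<subseteq> ball x \<tau>"
  proof
    fix z assume "z \<in> ball c' (\<tau> / 2)"
    then show "z \<in> ball x \<tau>" using c'(1) dist_triangle[of x z c'] by simp
  qed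
  moreover have cube: "ball x \<tau> \<subseteq> cbox 0 One"
    using assms(4) by (rule ball_subset_unit_cube)
  moreover have "c' \<in> ball c' (\<tau> / 2)" using assms(2) by simp
  ultimately have "c' \<in> cbox 0 One" by blast
  then obtain k where k: "k \<in> Basis \<rightarrow>\<^sub>E UNIV" "grid_cell h k \<subseteq> cball c' (real DIM('a) * h)"
    using grid_cell_subset_cball[of h c'] assms(2) by (auto simp: h_def mem_box)
  have "cball c' (real DIM('a) * h) \<subseteq> ball c' (\<tau> / 2)"
    using assms(2) by (auto simp: h_def)
  with k(2) have cell: "grid_cell h k \<subseteq> ball c' (\<tau> / 2)" by blast
  then have "k \<in> cube_cells h" using k(1) near_x cube by (auto simp: cube_cells_def)
  moreover have "P \<inter> grid_cell h k = {}" using cell c'(2) empty by blast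
  ultimately show ?thesis unfolding h_def by blast
qed

lemma emeasure_unit_cube_minus_shrunk_le:
  fixes \<tau> :: real
  assumes "0 \<le> \<tau>" "\<tau> \<le> 1 / 2"
  shows "emeasure lborel (cbox 0 One - shrunk_unit_cube \<tau> :: 'a::euclidean_space set)
           \<le> ennreal (2 * real DIM('a) * \<tau>)"
proof -
  have sub: "shrunk_unit_cube \<tau> \<subseteq> (cbox 0 One :: 'a set)"
    using assms by (auto simp: shrunk_unit_cube_def subset_box)
  have "emeasure lborel (cbox 0 One - shrunk_unit_cube \<tau> :: 'a set)
      = emeasure lborel (cbox 0 One :: 'a set) - emeasure lborel (shrunk_unit_cube \<tau> :: 'a set)"
    using sub by (intro emeasure_Diff) (auto simp: shrunk_unit_cube_def emeasure_lborel_cbox_eq)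
  also have "\<dots> = 1 - ennreal ((1 - 2 * \<tau>) ^ DIM('a))"
    using assms by (simp add: emeasure_lborel_cbox_eq shrunk_unit_cube_def inner_Basis algebra_simps)
  also have "\<dots> = ennreal (1 - (1 - 2 * \<tau>) ^ DIM('a))"
    using assms by (simp add: ennreal_minus[symmetric])
  also have "\<dots> \<le> ennreal (2 * real DIM('a) * \<tau>)"
    using Bernoulli_inequality[of "- 2 * \<tau>" "DIM('a)"] assms by (intro ennreal_leI) simp
  finally show ?thesis .
qed

lemma emeasure_distributed_le:
  assumes "distributed M lborel X (\<lambda>x. ennreal (f x))" "A \<in> sets borel" "S \<in> sets borel"
    and "\<And>x. x \<in> A \<inter> S \<Longrightarrow> f x \<le> C" "\<And>x. x \<in> A - S \<Longrightarrow> f x = 0"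
  shows "emeasure M (X -` A \<inter> space M) \<le> ennreal C * emeasure lborel (A \<inter> S)"
proof -
  have "emeasure M (X -` A \<inter> space M) = (\<integral>\<^sup>+x. ennreal (f x) * indicator A x \<partial>lborel)"
    using distributed_emeasure[OF assms(1)] assms(2) by simp
  also have "\<dots> \<le> (\<integral>\<^sup>+x. ennreal C * indicator (A \<inter> S) x \<partial>lborel)"
    using assms(4,5) by (intro nn_integral_mono) (auto split: split_indicator intro: ennreal_leI)
  also have "\<dots> = ennreal C * emeasure lborel (A \<inter> S)"
    using assms(2,3) by (intro nn_integral_cmult_indicator) auto
  finally show ?thesis .
qed

lemma emeasure_distributed_ge:
  assumes "distributed M lborel X (\<lambda>x. ennreal (f x))" "A \<in> sets borel"
    and "\<And>x. x \<in> A \<Longrightarrow> c \<le> f x"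
  shows "ennreal c * emeasure lborel A \<le> emeasure M (X -` A \<inter> space M)"
proof -
  have "ennreal c * emeasure lborel A = (\<integral>\<^sup>+x. ennreal c * indicator A x \<partial>lborel)"
    using assms(2) by (intro nn_integral_cmult_indicator[symmetric]) auto
  also have "\<dots> \<le> (\<integral>\<^sup>+x. ennreal (f x) * indicator A x \<partial>lborel)"
    using assms(3) by (intro nn_integral_mono) (auto split: split_indicator intro: ennreal_leI)
  also have "\<dots> = emeasure M (X -` A \<inter> space M)"
    using distributed_emeasure[OF assms(1)] assms(2) by simp
  finally show ?thesis .
qed

lemma (in prob_space) prob_indep_vars_all_miss:
  assumes "indep_vars (\<lambda>_. borel) Z I" "J \<subseteq> I" "finite J" "B \<in> sets borel"
  shows "prob {\<omega>\<in>space M. \<forall>j\<in>J. Z j \<omega> \<notin> B} = (\<Prod>j\<in>J. 1 - prob (Z j -` B \<inter> space M))"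
proof (cases "J = {}")
  case True
  then show ?thesis by (simp add: prob_space)
next
  case False
  have "{\<omega>\<in>space M. \<forall>j\<in>J. Z j \<omega> \<notin> B} = (\<Inter>j\<in>J. Z j -` (- B) \<inter> space M)"
    using False by auto
  also have "prob \<dots> = (\<Prod>j\<in>J. prob (Z j -` (- B) \<inter> space M))"
    using assms False by (intro indep_varsD) auto
  also have "\<dots> = (\<Prod>j\<in>J. 1 - prob (Z j -` B \<inter> space M))"
  proof (rule prod.cong)
    fix j assume "j \<in> J"
    then have "Z j \<in> borel_measurable M" using assms(1,2) by (auto simp: indep_vars_def)
    then have "Z j -` B \<inter> space M \<in> events" using assms(4) by measurable
    moreover have "Z j -` (- B) \<inter> space M = space M - (Z j -` B \<inter> space M)" by auto
    ultimately show "prob (Z j -` (- B) \<inter> space M) = 1 - prob (Z j -` B \<inter> space M)"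
      by (simp add: prob_compl)
  qed simp
  finally show ?thesis .
qed

locale unit_cube_sample = prob_space M
  for M :: "'b measure" and f :: "'a::euclidean_space \<Rightarrow> real" and c C :: real
    and X :: "'b \<Rightarrow> 'a" and Xs :: "nat \<Rightarrow> 'b \<Rightarrow> 'a" +
  assumes density_pos: "0 < c"
    and density_bounds: "\<And>x. x \<in> cbox 0 One \<Longrightarrow> c \<le> f x \<and> f x \<le> C"
    and density_outside: "\<And>x. x \<notin> cbox 0 One \<Longrightarrow> f x = 0"
    and distributed_X: "distributed M lborel X (\<lambda>x. ennreal (f x))"
    and distributed_Xs: "\<And>i. distributed M lborel (Xs i) (\<lambda>x. ennreal (f x))"
    and indep: "indep_vars (\<lambda>_. borel) (\<lambda>i. case i of None \<Rightarrow> X | Some j \<Rightarrow> Xs j) UNIV"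
begin

lemma density_lower_le_1: "c \<le> 1"
proof -
  have "ennreal c * emeasure lborel (cbox 0 One :: 'a set) \<le> emeasure M (X -` cbox 0 One \<inter> space M)"
    by (rule emeasure_distributed_ge[OF distributed_X]) (auto dest: density_bounds)
  also have "\<dots> \<le> 1" by (rule emeasure_le_1)
  finally show ?thesis by (simp add: emeasure_lborel_cbox_eq inner_Basis)
qed

lemma density_upper_pos: "0 < C"
  using density_pos density_bounds[of 0] by (force simp: mem_box)

lemma cell_mass_bounds:
  assumes "0 < h" "h \<le> 1"
  shows "0 < c * h ^ DIM('a)" "c * h ^ DIM('a) \<le> 1"
  using assms density_pos density_lower_le_1 mult_mono[of c 1 "h ^ DIM('a)" 1]
  by (auto simp: power_le_one)

lemma prob_X_outside_shrunk_cube: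
  fixes \<tau> :: real
  assumes "0 \<le> \<tau>" "\<tau> \<le> 1 / 2"
  shows "prob (X -` (- shrunk_unit_cube \<tau>) \<inter> space M) \<le> 2 * real DIM('a) * C * \<tau>"
proof -
  have C: "0 \<le> C" using density_upper_pos by simp
  have "emeasure M (X -` (- shrunk_unit_cube \<tau>) \<inter> space M)
      \<le> ennreal C * emeasure lborel (- shrunk_unit_cube \<tau> \<inter> cbox 0 One :: 'a set)"
    using density_bounds density_outside
    by (intro emeasure_distributed_le[OF distributed_X]) (auto simp: shrunk_unit_cube_def)
  also have "\<dots> = ennreal C * emeasure lborel (cbox 0 One - shrunk_unit_cube \<tau> :: 'a set)"
    by (simp add: Int_commute Diff_eq)
  also have "\<dots> \<le> ennreal C * ennreal (2 * real DIM('a) * \<tau>)"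
    using assms emeasure_unit_cube_minus_shrunk_le by (intro mult_left_mono) auto
  also have "\<dots> = ennreal (2 * real DIM('a) * C * \<tau>)"
    using C assms by (simp add: ennreal_mult'[symmetric] mult_ac)
  finally show ?thesis
    using C assms by (simp add: emeasure_eq_measure ennreal_le_iff)
qed

lemma prob_samples_miss_le:
  assumes "B \<in> sets borel" "B \<subseteq> cbox 0 One"
  shows "prob {\<omega>\<in>space M. \<forall>i<n. Xs i \<omega> \<notin> B} \<le> (1 - c * measure lborel B) ^ n"
proof -
  have "{\<omega>\<in>space M. \<forall>i<n. Xs i \<omega> \<notin> B}
      = {\<omega>\<in>space M. \<forall>j\<in>Some ` {..<n}. (case j of None \<Rightarrow> X | Some i \<Rightarrow> Xs i) \<omega> \<notin> B}"
    by auto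
  then have "prob {\<omega>\<in>space M. \<forall>i<n. Xs i \<omega> \<notin> B} = (\<Prod>i<n. 1 - prob (Xs i -` B \<inter> space M))"
    using prob_indep_vars_all_miss[OF indep _ _ assms(1), of "Some ` {..<n}"]
    by (simp add: prod.reindex)
  also have "\<dots> \<le> (\<Prod>i<n. 1 - c * measure lborel B)"
  proof (rule prod_mono)
    fix i
    have "emeasure lborel B \<le> emeasure lborel (cbox 0 One :: 'a set)"
      using assms by (intro emeasure_mono) auto
    then have "emeasure lborel B = ennreal (measure lborel B)"
      by (intro emeasure_eq_ennreal_measure) (auto simp: emeasure_lborel_cbox_eq top_unique)
    moreover have "ennreal c * emeasure lborel B \<le> emeasure M (Xs i -` B \<inter> space M)"
      using assms by (intro emeasure_distributed_ge[OF distributed_Xs]) (auto dest: density_bounds)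
    ultimately have "c * measure lborel B \<le> prob (Xs i -` B \<inter> space M)"
      using density_pos by (simp add: emeasure_eq_measure ennreal_mult[symmetric] ennreal_le_iff)
    then show "0 \<le> 1 - prob (Xs i -` B \<inter> space M) \<and>
        1 - prob (Xs i -` B \<inter> space M) \<le> 1 - c * measure lborel B"
      by simp
  qed
  finally show ?thesis by simp
qed

lemma prob_far_X1_choice_le:
  fixes y :: "'b \<Rightarrow> 'a" and \<tau> e :: real
  assumes "0 < \<tau>" "\<tau> \<le> 1 / 2" "2 * \<tau> \<le> e"
    and "AE \<omega> in M. X1_choice {Xs i \<omega> | i. i < n} (X \<omega>) (y \<omega>)"
  defines "h \<equiv> \<tau> / (4 * real DIM('a))"
  shows "measure M {\<omega>\<in>space M. e < dist (y \<omega>) (X \<omega>)}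
           \<le> 2 * real DIM('a) * C * \<tau> +
              real (card (cube_cells h :: ('a \<Rightarrow> nat) set)) * (1 - c * h ^ DIM('a)) ^ n"
proof -
  let ?Out = "X -` (- shrunk_unit_cube \<tau>) \<inter> space M"
  let ?Miss = "\<lambda>k. {\<omega>\<in>space M. \<forall>i<n. Xs i \<omega> \<notin> grid_cell h k}"
  let ?K = "cube_cells h :: ('a \<Rightarrow> nat) set"
  have h: "0 < h" using assms(1) by (simp add: h_def)
  have [measurable]: "X \<in> borel_measurable M" "\<And>i. Xs i \<in> borel_measurable M"
    using distributed_measurable[OF distributed_X] distributed_measurable[OF distributed_Xs] by auto
  have [measurable]: "grid_cell h k \<in> sets borel" "shrunk_unit_cube \<tau> \<in> sets borel" for k
    by (simp_all add: grid_cell_def shrunk_unit_cube_def)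
  have events: "?Out \<in> events" "\<And>k. ?Miss k \<in> events"
    by measurable
  then have union_event: "?Out \<union> (\<Union>k\<in>?K. ?Miss k) \<in> events"
    using finite_cube_cells[OF h] by (intro sets.Un sets.finite_UN) auto
  have "AE \<omega> in M. \<omega> \<in> {\<omega>\<in>space M. e < dist (y \<omega>) (X \<omega>)} \<longrightarrow>
      \<omega> \<in> ?Out \<union> (\<Union>k\<in>?K. ?Miss k)"
    using assms(4)
  proof eventually_elim
    case (elim \<omega>)
    show ?case
    proof (cases "X \<omega> \<in> shrunk_unit_cube \<tau>")
      case True
      show ?thesis
      proof
        assume far: "\<omega> \<in> {\<omega>\<in>space M. e < dist (y \<omega>) (X \<omega>)}"
        then obtain k where "k \<in> ?K" "{Xs i \<omega> | i. i < n} \<inter> grid_cell h k = {}"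
          using X1_choice_far_empty_cube_cell[OF elim assms(1) _ True] assms(3)
          unfolding h_def by fastforce
        then show "\<omega> \<in> ?Out \<union> (\<Union>k\<in>?K. ?Miss k)" using far by blast
      qed
    qed auto
  qed
  then have "measure M {\<omega>\<in>space M. e < dist (y \<omega>) (X \<omega>)}
      \<le> prob (?Out \<union> (\<Union>k\<in>?K. ?Miss k))"
    using union_event by (rule finite_measure_mono_AE)
  also have "\<dots> \<le> prob ?Out + prob (\<Union>k\<in>?K. ?Miss k)"
    using events finite_cube_cells[OF h] by (intro measure_Un_le) auto
  also have "\<dots> \<le> prob ?Out + (\<Sum>k\<in>?K. prob (?Miss k))"
    using events finite_cube_cells[OF h] by (intro add_left_mono finite_measure_subadditive_finite) auto
  also have "\<dots> \<le> 2 * real DIM('a) * C * \<tau> + (\<Sum>k\<in>?K. (1 - c * h ^ DIM('a)) ^ n)"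
  proof (intro add_mono sum_mono)
    show "prob ?Out \<le> 2 * real DIM('a) * C * \<tau>"
      using assms(1,2) by (intro prob_X_outside_shrunk_cube) auto
    fix k assume "k \<in> ?K"
    then show "prob (?Miss k) \<le> (1 - c * h ^ DIM('a)) ^ n"
      using prob_samples_miss_le[of "grid_cell h k" n] h
      by (simp add: cube_cells_def measure_grid_cell)
  qed
  finally show ?thesis by simp
qed

lemma prob_far_X1_choice_approx:
  fixes Y :: "nat \<Rightarrow> 'b \<Rightarrow> 'a" and e \<delta> :: real
  assumes "0 < e" "0 < \<delta>"
    and "\<And>n. 1 \<le> n \<Longrightarrow> AE \<omega> in M. X1_choice {Xs i \<omega> | i. i < n} (X \<omega>) (Y n \<omega>)"
  shows "\<exists>b. b \<longlonglongrightarrow> 0 \<and>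
           (\<forall>\<^sub>F n in sequentially. measure M {\<omega>\<in>space M. e < dist (Y n \<omega>) (X \<omega>)} \<le> \<delta> + b n)"
proof -
  define \<tau> where "\<tau> = min (e / 2) (min (1 / 2) (\<delta> / (2 * real DIM('a) * C)))"
  define h where "h = \<tau> / (4 * real DIM('a))"
  define b where "b n = real (card (cube_cells h :: ('a \<Rightarrow> nat) set)) * (1 - c * h ^ DIM('a)) ^ n" for n
  have DC: "0 < 2 * real DIM('a) * C" using density_upper_pos by simp
  have \<tau>: "0 < \<tau>" "\<tau> \<le> 1 / 2" "2 * \<tau> \<le> e"
    using assms(1,2) DC by (simp_all add: \<tau>_def)
  have "\<tau> \<le> \<delta> / (2 * real DIM('a) * C)" by (simp add: \<tau>_def)
  then have \<tau>\<delta>: "2 * real DIM('a) * C * \<tau> \<le> \<delta>"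
    using DC by (simp add: pos_le_divide_eq mult.commute)
  have "0 < h" using \<tau> by (simp add: h_def)
  have "1 \<le> real DIM('a)" by (simp add: DIM_positive Suc_le_eq)
  then have "\<tau> \<le> 4 * real DIM('a)" using \<tau> by linarith
  then have "h \<le> 1" by (simp add: h_def)
  then have "b \<longlonglongrightarrow> 0"
    unfolding b_def using cell_mass_bounds[OF \<open>0 < h\<close>]
    by (intro tendsto_mult_right_zero LIMSEQ_realpow_zero) auto
  moreover have "\<forall>\<^sub>F n in sequentially.
      measure M {\<omega>\<in>space M. e < dist (Y n \<omega>) (X \<omega>)} \<le> \<delta> + b n"
  proof (rule eventually_sequentiallyI)
    fix n :: nat assume "1 \<le> n"
    then show "measure M {\<omega>\<in>space M. e < dist (Y n \<omega>) (X \<omega>)} \<le> \<delta> + b n"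
      using prob_far_X1_choice_le[OF \<tau> assms(3)] \<tau>\<delta> unfolding b_def h_def by fastforce
  qed
  ultimately show ?thesis by blast
qed

end

theorem corollary1:
  fixes M :: "'b measure" and f :: "'a::euclidean_space \<Rightarrow> real"
    and X :: "'b \<Rightarrow> 'a" and Xs :: "nat \<Rightarrow> 'b \<Rightarrow> 'a" and Y :: "nat \<Rightarrow> 'b \<Rightarrow> 'a"
  assumes "prob_space M"
    and "continuous_on (cbox 0 One) f"
    and "\<exists>c C. 0 < c \<and> c \<le> C \<and> (\<forall>x\<in>cbox 0 One. c \<le> f x \<and> f x \<le> C)"
    and "\<forall>x. x \<notin> cbox 0 One \<longrightarrow> f x = 0"
    and "distributed M lborel X (\<lambda>x. ennreal (f x))"
    and "\<forall>i. distributed M lborel (Xs i) (\<lambda>x. ennreal (f x))"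
    and "prob_space.indep_vars M (\<lambda>_. borel)
           (\<lambda>i. case i of None \<Rightarrow> X | Some j \<Rightarrow> Xs j) (UNIV :: nat option set)"
    and "\<forall>n. Y n \<in> borel_measurable M"
    and "\<forall>n\<ge>1. AE \<omega> in M. X1_choice {Xs i \<omega> | i. i < n} (X \<omega>) (Y n \<omega>)"
  shows "\<forall>e>0. (\<lambda>n. measure M {\<omega>\<in>space M. e < dist (Y n \<omega>) (X \<omega>)}) \<longlonglongrightarrow> 0"
proof (intro allI impI)
  fix e :: real assume "0 < e"
  obtain c C where "0 < c" and bounds: "\<forall>x\<in>cbox 0 One. c \<le> f x \<and> f x \<le> C"
    using assms(3) by blast
  interpret unit_cube_sample M f c C X Xs
    using assms(1,4-7) \<open>0 < c\<close> bounds
    by (simp add: unit_cube_sample_def unit_cube_sample_axioms_def)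
  show "(\<lambda>n. measure M {\<omega>\<in>space M. e < dist (Y n \<omega>) (X \<omega>)}) \<longlonglongrightarrow> 0"
    using prob_far_X1_choice_approx[OF \<open>0 < e\<close>] assms(9)
    by (intro LIMSEQ_zero_if_eventually_le_add_null) auto
qed

end
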